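(* Assume (FS), let $E$ be a small subset of $\mathfrak C$ and $p\in S(E)$. The following are equivalent: (1) $p$ is $\operatorname{acl}$-stationary, i.e. $p$ has a unique extension to a complete type over $\operatorname{acl}(E)$; (2) $E\subseteq\operatorname{dcl}(Ea)$ is primary for some $a\models p$; (3) $E\subseteq\operatorname{dcl}(Ea)$ is primary for every $a\models p$.
   Context: $L$ is a first-order language, $T$ a complete $L$-theory, $\mathfrak C$ a monster model of $T$; $\operatorname{acl}$, $\operatorname{dcl}$ are computed in $\mathfrak C$. (FS): $T$ codes finite sets, i.e. every finite set of real tuples has a code which is a real tuple. For small $F\subseteq K$, the extension $F\subseteq K$ is primary if $\operatorname{dcl}(K)\cap\operatorname{acl}(F)=\operatorname{dcl}(F)$. *)

theory Defs
  imports Main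
begin

text \<open>Terms/formulas may contain parameters (elements of the
monster model, type 'a); an L(A)-formula is one whose parameters lie in A.\<close>

datatype ('f,'a) trm = Var nat | Par 'a | Fn 'f "('f,'a) trm list"

datatype ('f,'r,'a) fm =
    Eq "('f,'a) trm" "('f,'a) trm"
  | Rel 'r "('f,'a) trm list"
  | Neg "('f,'r,'a) fm"
  | Conj "('f,'r,'a) fm" "('f,'r,'a) fm"
  | Ex nat "('f,'r,'a) fm"

type_synonym ('f,'r) lang = "('f \<Rightarrow> nat) \<times> ('r \<Rightarrow> nat)"
text \<open>A structure whose universe is the whole type 'a.\<close>
type_synonym ('f,'r,'a) struc = "('f \<Rightarrow> 'a list \<Rightarrow> 'a) \<times> ('r \<Rightarrow> 'a list \<Rightarrow> bool)"

fun wft :: "('f \<Rightarrow> nat) \<Rightarrow> ('f,'a) trm \<Rightarrow> bool" where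
  "wft fa (Var i) = True"
| "wft fa (Par c) = True"
| "wft fa (Fn f ts) = (length ts = fa f \<and> (\<forall>t\<in>set ts. wft fa t))"

fun wff :: "('f,'r) lang \<Rightarrow> ('f,'r,'a) fm \<Rightarrow> bool" where
  "wff L (Eq s t) = (wft (fst L) s \<and> wft (fst L) t)"
| "wff L (Rel r ts) = (length ts = snd L r \<and> (\<forall>t\<in>set ts. wft (fst L) t))"
| "wff L (Neg \<phi>) = wff L \<phi>"
| "wff L (Conj \<phi> \<psi>) = (wff L \<phi> \<and> wff L \<psi>)"
| "wff L (Ex x \<phi>) = wff L \<phi>"

fun frees_t :: "('f,'a) trm \<Rightarrow> nat set" where
  "frees_t (Var i) = {i}"
| "frees_t (Par c) = {}"
| "frees_t (Fn f ts) = (\<Union>t\<in>set ts. frees_t t)"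

fun params_t :: "('f,'a) trm \<Rightarrow> 'a set" where
  "params_t (Var i) = {}"
| "params_t (Par c) = {c}"
| "params_t (Fn f ts) = (\<Union>t\<in>set ts. params_t t)"

fun frees :: "('f,'r,'a) fm \<Rightarrow> nat set" where
  "frees (Eq s t) = frees_t s \<union> frees_t t"
| "frees (Rel r ts) = (\<Union>t\<in>set ts. frees_t t)"
| "frees (Neg \<phi>) = frees \<phi>"
| "frees (Conj \<phi> \<psi>) = frees \<phi> \<union> frees \<psi>"
| "frees (Ex x \<phi>) = frees \<phi> - {x}"

fun params :: "('f,'r,'a) fm \<Rightarrow> 'a set" where
  "params (Eq s t) = params_t s \<union> params_t t"
| "params (Rel r ts) = (\<Union>t\<in>set ts. params_t t)"
| "params (Neg \<phi>) = params \<phi>"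
| "params (Conj \<phi> \<psi>) = params \<phi> \<union> params \<psi>"
| "params (Ex x \<phi>) = params \<phi>"

fun evalt :: "('f \<Rightarrow> 'a list \<Rightarrow> 'a) \<Rightarrow> (nat \<Rightarrow> 'a) \<Rightarrow> ('f,'a) trm \<Rightarrow> 'a" where
  "evalt F v (Var i) = v i"
| "evalt F v (Par c) = c"
| "evalt F v (Fn f ts) = F f (map (evalt F v) ts)"

fun sat :: "('f,'r,'a) struc \<Rightarrow> (nat \<Rightarrow> 'a) \<Rightarrow> ('f,'r,'a) fm \<Rightarrow> bool" where
  "sat M v (Eq s t) = (evalt (fst M) v s = evalt (fst M) v t)"
| "sat M v (Rel r ts) = snd M r (map (evalt (fst M) v) ts)"
| "sat M v (Neg \<phi>) = (\<not> sat M v \<phi>)"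
| "sat M v (Conj \<phi> \<psi>) = (sat M v \<phi> \<and> sat M v \<psi>)"
| "sat M v (Ex x \<phi>) = (\<exists>b. sat M (v(x := b)) \<phi>)"

definition Lfm :: "('f,'r) lang \<Rightarrow> 'a set \<Rightarrow> nat \<Rightarrow> ('f,'r,'a) fm \<Rightarrow> bool" where
  "Lfm L A n \<phi> \<longleftrightarrow> wff L \<phi> \<and> params \<phi> \<subseteq> A \<and> frees \<phi> \<subseteq> {..<n}"

definition satT :: "('f,'r,'a) struc \<Rightarrow> 'a list \<Rightarrow> ('f,'r,'a) fm \<Rightarrow> bool" where
  "satT M a \<phi> \<longleftrightarrow> sat M (\<lambda>i. a ! i) \<phi>"

definition realizes :: "('f,'r,'a) struc \<Rightarrow> 'a list \<Rightarrow> ('f,'r,'a) fm set \<Rightarrow> bool" where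
  "realizes M a p \<longleftrightarrow> (\<forall>\<phi>\<in>p. satT M a \<phi>)"

text \<open>Complete n-types over A (S_n(A)): complete sets of L(A)-formulas
consistent with Th(C_A), i.e. finitely satisfiable in C.\<close>
definition ctype :: "('f,'r) lang \<Rightarrow> ('f,'r,'a) struc \<Rightarrow> 'a set \<Rightarrow> nat \<Rightarrow> ('f,'r,'a) fm set \<Rightarrow> bool" where
  "ctype L M A n p \<longleftrightarrow>
     (\<forall>\<phi>\<in>p. Lfm L A n \<phi>) \<and>
     (\<forall>Q. finite Q \<and> Q \<subseteq> p \<longrightarrow> (\<exists>a. length a = n \<and> realizes M a Q)) \<and>
     (\<forall>\<phi>. Lfm L A n \<phi> \<longrightarrow> \<phi> \<in> p \<or> Neg \<phi> \<in> p)"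

definition dcl :: "('f,'r) lang \<Rightarrow> ('f,'r,'a) struc \<Rightarrow> 'a set \<Rightarrow> 'a set" where
  "dcl L M A = {b. \<exists>\<phi>. Lfm L A 1 \<phi> \<and> {c. satT M [c] \<phi>} = {b}}"

definition acl :: "('f,'r) lang \<Rightarrow> ('f,'r,'a) struc \<Rightarrow> 'a set \<Rightarrow> 'a set" where
  "acl L M A = {b. \<exists>\<phi>. Lfm L A 1 \<phi> \<and> finite {c. satT M [c] \<phi>} \<and> b \<in> {c. satT M [c] \<phi>}}"

definition automorphism :: "('f,'r) lang \<Rightarrow> ('f,'r,'a) struc \<Rightarrow> ('a \<Rightarrow> 'a) \<Rightarrow> bool" where
  "automorphism L M \<sigma> \<longleftrightarrow> bij \<sigma> \<and>
     (\<forall>f xs. length xs = fst L f \<longrightarrow> \<sigma> (fst M f xs) = fst M f (map \<sigma> xs)) \<and>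
     (\<forall>r xs. length xs = snd L r \<longrightarrow> (snd M r (map \<sigma> xs) \<longleftrightarrow> snd M r xs))"

definition is_code :: "('f,'r) lang \<Rightarrow> ('f,'r,'a) struc \<Rightarrow> 'a list \<Rightarrow> 'a list set \<Rightarrow> bool" where
  "is_code L M c S \<longleftrightarrow>
     (\<forall>\<sigma>. automorphism L M \<sigma> \<longrightarrow> (map \<sigma> ` S = S \<longleftrightarrow> map \<sigma> c = c))"

definition FS :: "('f,'r) lang \<Rightarrow> ('f,'r,'a) struc \<Rightarrow> bool" where
  "FS L M \<longleftrightarrow> (\<forall>n S. finite S \<and> (\<forall>s\<in>S. length s = n) \<longrightarrow> (\<exists>c. is_code L M c S))"

definition small :: "'k rel \<Rightarrow> 'a set \<Rightarrow> bool" where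
  "small \<kappa> A \<longleftrightarrow> (card_of A, \<kappa>) \<in> ordLess"

text \<open>Monster model: kappa-saturated and strongly kappa-homogeneous, kappa an
infinite cardinal bigger than the language.\<close>
definition monster :: "('f,'r) lang \<Rightarrow> ('f,'r,'a) struc \<Rightarrow> 'k rel \<Rightarrow> bool" where
  "monster L M \<kappa> \<longleftrightarrow>
     Card_order \<kappa> \<and> infinite (Field \<kappa>) \<and>
     small \<kappa> (UNIV :: 'f set) \<and> small \<kappa> (UNIV :: 'r set) \<and>
     (\<forall>A n p. small \<kappa> A \<and> ctype L M A n p \<longrightarrow> (\<exists>a. length a = n \<and> realizes M a p)) \<and>
     (\<forall>A g. small \<kappa> A \<and>
        (\<forall>\<phi> a. set a \<subseteq> A \<and> Lfm L {} (length a) \<phi> \<longrightarrow> (satT M a \<phi> \<longleftrightarrow> satT M (map g a) \<phi>))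
        \<longrightarrow> (\<exists>\<sigma>. automorphism L M \<sigma> \<and> (\<forall>x\<in>A. \<sigma> x = g x)))"

definition primary :: "('f,'r) lang \<Rightarrow> ('f,'r,'a) struc \<Rightarrow> 'a set \<Rightarrow> 'a set \<Rightarrow> bool" where
  "primary L M F K \<longleftrightarrow> F \<subseteq> K \<and> dcl L M K \<inter> acl L M F = dcl L M F"

definition acl_stationary :: "('f,'r) lang \<Rightarrow> ('f,'r,'a) struc \<Rightarrow> 'a set \<Rightarrow> nat \<Rightarrow> ('f,'r,'a) fm set \<Rightarrow> bool" where
  "acl_stationary L M E n p \<longleftrightarrow> (\<exists>!q. ctype L M (acl L M E) n q \<and> p \<subseteq> q)"

end

theory Submission
  imports Defs
begin

text \<open>
  Over a small set A, dcl A consists of the points fixed by all automorphisms of the monster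
  model fixing A, and acl A of the points with a finite orbit under them; the proof works through
  this Galois correspondence.

  If p is acl-stationary and \<sigma> fixes E, then a and \<sigma> a have the same type over acl E. So for
  b \<in> dcl (E \<union> set a) \<inter> acl E some \<tau> fixing E \<union> {b} maps a to \<sigma> a; then inv \<tau> \<circ> \<sigma> fixes
  E \<union> set a, hence b, and \<sigma> b = \<tau> b = b, i.e. b \<in> dcl E.

  Conversely, let E \<subseteq> dcl (E \<union> set a) be primary and \<phi>(x, c) a formula with parameters c from
  acl E. The set S of conjugates c' of c over E with \<phi>(a, c') is finite and invariant under the
  automorphisms fixing E \<union> set a, so by (FS) it has a code in dcl (E \<union> set a) \<inter> acl E = dcl E.
  Every other realization of p is \<sigma> a for some \<sigma> fixing E; \<sigma> fixes the code, hence S, so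
  \<phi>(\<sigma> a, c) holds iff \<phi>(a, c) does. Thus tp(a / acl E) is the only extension of p.
\<close>

section \<open>Syntax\<close>

lemma finite_frees_t: "finite (frees_t t)"
  by (induction t) auto

lemma finite_frees: "finite (frees \<phi>)"
  by (induction \<phi>) (auto simp: finite_frees_t)

lemma finite_params_t: "finite (params_t t)"
  by (induction t) auto

lemma finite_params: "finite (params \<phi>)"
  by (induction \<phi>) (auto simp: finite_params_t)

lemma evalt_cong: "\<forall>i\<in>frees_t t. v i = w i \<Longrightarrow> evalt F v t = evalt F w t"
proof (induction t)
  case (Fn f ts)
  hence "map (evalt F v) ts = map (evalt F w) ts" by auto
  thus ?case by (simp only: evalt.simps)
qed auto

lemma sat_cong: "\<forall>i\<in>frees \<phi>. v i = w i \<Longrightarrow> sat M v \<phi> = sat M w \<phi>"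
proof (induction \<phi> arbitrary: v w)
  case (Eq s t)
  thus ?case using evalt_cong[of s v w] evalt_cong[of t v w] by simp
next
  case (Rel r ts)
  have "map (evalt (fst M) v) ts = map (evalt (fst M) w) ts"
    using Rel evalt_cong by fastforce
  thus ?case by (simp only: sat.simps)
next
  case (Conj \<phi> \<psi>)
  have "sat M v \<phi> = sat M w \<phi>" "sat M v \<psi> = sat M w \<psi>" using Conj by auto
  thus ?case by simp
next
  case (Ex x \<phi>)
  have "sat M (v(x := b)) \<phi> = sat M (w(x := b)) \<phi>" for b
    using Ex.IH Ex.prems by auto
  thus ?case by simp
qed auto

fun map_params_t :: "('a \<Rightarrow> 'a) \<Rightarrow> ('f,'a) trm \<Rightarrow> ('f,'a) trm" where
  "map_params_t \<sigma> (Var i) = Var i"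
| "map_params_t \<sigma> (Par c) = Par (\<sigma> c)"
| "map_params_t \<sigma> (Fn f ts) = Fn f (map (map_params_t \<sigma>) ts)"

fun map_params :: "('a \<Rightarrow> 'a) \<Rightarrow> ('f,'r,'a) fm \<Rightarrow> ('f,'r,'a) fm" where
  "map_params \<sigma> (Eq s t) = Eq (map_params_t \<sigma> s) (map_params_t \<sigma> t)"
| "map_params \<sigma> (Rel r ts) = Rel r (map (map_params_t \<sigma>) ts)"
| "map_params \<sigma> (Neg \<phi>) = Neg (map_params \<sigma> \<phi>)"
| "map_params \<sigma> (Conj \<phi> \<psi>) = Conj (map_params \<sigma> \<phi>) (map_params \<sigma> \<psi>)"
| "map_params \<sigma> (Ex x \<phi>) = Ex x (map_params \<sigma> \<phi>)"

lemma wft_map_params_t[simp]: "wft fa (map_params_t \<sigma> t) = wft fa t"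
  by (induction t) auto

lemma wff_map_params[simp]: "wff L (map_params \<sigma> \<phi>) = wff L \<phi>"
  by (induction \<phi>) auto

lemma frees_t_map_params_t[simp]: "frees_t (map_params_t \<sigma> t) = frees_t t"
  by (induction t) auto

lemma frees_map_params[simp]: "frees (map_params \<sigma> \<phi>) = frees \<phi>"
  by (induction \<phi>) auto

lemma map_params_t_comp[simp]: "map_params_t \<sigma> (map_params_t \<tau> t) = map_params_t (\<sigma> \<circ> \<tau>) t"
  by (induction t) auto

lemma map_params_comp[simp]: "map_params \<sigma> (map_params \<tau> \<phi>) = map_params (\<sigma> \<circ> \<tau>) \<phi>"
  by (induction \<phi>) (auto simp: comp_def)

lemma map_params_t_id_on: "(\<And>x. x \<in> params_t t \<Longrightarrow> \<sigma> x = x) \<Longrightarrow> map_params_t \<sigma> t = t"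
  by (induction t) (auto intro: map_idI)

lemma map_params_id_on: "(\<And>x. x \<in> params \<phi> \<Longrightarrow> \<sigma> x = x) \<Longrightarrow> map_params \<sigma> \<phi> = \<phi>"
  by (induction \<phi>) (auto intro: map_idI map_params_t_id_on)

section \<open>Automorphisms\<close>

lemma automorphism_evalt:
  assumes "automorphism L M \<sigma>" "wft (fst L) t"
  shows "\<sigma> (evalt (fst M) v t) = evalt (fst M) (\<lambda>i. \<sigma> (v i)) (map_params_t \<sigma> t)"
  using assms(2)
proof (induction t)
  case (Fn f ts)
  have "\<sigma> (fst M f (map (evalt (fst M) v) ts)) = fst M f (map \<sigma> (map (evalt (fst M) v) ts))"
    using assms(1) Fn.prems unfolding automorphism_def by auto
  also have "map \<sigma> (map (evalt (fst M) v) ts) = map (evalt (fst M) (\<lambda>i. \<sigma> (v i)) \<circ> map_params_t \<sigma>) ts"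
    using Fn by (auto simp: comp_def)
  finally show ?case by simp
qed auto

lemma automorphism_sat:
  assumes "automorphism L M \<sigma>" "wff L \<phi>"
  shows "sat M (\<lambda>i. \<sigma> (v i)) (map_params \<sigma> \<phi>) = sat M v \<phi>"
  using assms(2)
proof (induction \<phi> arbitrary: v)
  case (Eq s t)
  have "inj \<sigma>" using assms(1) bij_is_inj unfolding automorphism_def by blast
  moreover have "evalt (fst M) (\<lambda>i. \<sigma> (v i)) (map_params_t \<sigma> u) = \<sigma> (evalt (fst M) v u)"
    if "u \<in> {s, t}" for u
    using Eq that automorphism_evalt[OF assms(1)] by auto
  ultimately show ?case by (simp add: inj_eq)
next
  case (Rel r ts)
  have "map (evalt (fst M) (\<lambda>i. \<sigma> (v i))) (map (map_params_t \<sigma>) ts) = map \<sigma> (map (evalt (fst M) v) ts)"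
    using Rel automorphism_evalt[OF assms(1)] by auto
  moreover have "snd M r (map \<sigma> (map (evalt (fst M) v) ts)) = snd M r (map (evalt (fst M) v) ts)"
    using assms(1) Rel.prems unfolding automorphism_def by (simp del: map_map)
  ultimately show ?case by (simp only: map_params.simps sat.simps)
next
  case (Ex x \<phi>)
  have "surj \<sigma>" using assms(1) bij_is_surj unfolding automorphism_def by blast
  hence "(\<exists>b. sat M ((\<lambda>i. \<sigma> (v i))(x := b)) (map_params \<sigma> \<phi>))
      \<longleftrightarrow> (\<exists>b. sat M ((\<lambda>i. \<sigma> (v i))(x := \<sigma> b)) (map_params \<sigma> \<phi>))"
    by (metis surjD)
  also have "\<dots> \<longleftrightarrow> (\<exists>b. sat M (v(x := b)) \<phi>)"
  proof -
    have "sat M ((\<lambda>i. \<sigma> (v i))(x := \<sigma> b)) (map_params \<sigma> \<phi>) = sat M (v(x := b)) \<phi>" for b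
    proof -
      have eq: "(\<lambda>i. \<sigma> (v i))(x := \<sigma> b) = (\<lambda>i. \<sigma> ((v(x := b)) i))" by auto
      show ?thesis unfolding eq by (rule Ex.IH) (use Ex.prems in simp)
    qed
    thus ?thesis by simp
  qed
  finally show ?case by simp
qed auto

lemma automorphism_satT:
  assumes "automorphism L M \<sigma>" "wff L \<phi>" "frees \<phi> \<subseteq> {..<length a}"
  shows "satT M (map \<sigma> a) (map_params \<sigma> \<phi>) = satT M a \<phi>"
proof -
  have "satT M (map \<sigma> a) (map_params \<sigma> \<phi>) = sat M (\<lambda>i. \<sigma> (a ! i)) (map_params \<sigma> \<phi>)"
    unfolding satT_def using assms(3) by (intro sat_cong) auto
  thus ?thesis using automorphism_sat[OF assms(1,2)] by (simp add: satT_def)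
qed

definition Aut :: "('f,'r) lang \<Rightarrow> ('f,'r,'a) struc \<Rightarrow> 'a set \<Rightarrow> ('a \<Rightarrow> 'a) set" where
  "Aut L M A = {\<sigma>. automorphism L M \<sigma> \<and> (\<forall>x\<in>A. \<sigma> x = x)}"

lemma Aut_satT:
  assumes "\<sigma> \<in> Aut L M A" "Lfm L A (length a) \<phi>"
  shows "satT M (map \<sigma> a) \<phi> = satT M a \<phi>"
proof -
  have "map_params \<sigma> \<phi> = \<phi>" using assms by (intro map_params_id_on) (auto simp: Aut_def Lfm_def)
  thus ?thesis using automorphism_satT[of L M \<sigma> \<phi> a] assms by (simp add: Aut_def Lfm_def)
qed

lemma Aut_antimono: "A \<subseteq> B \<Longrightarrow> Aut L M B \<subseteq> Aut L M A"
  unfolding Aut_def by blast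

lemma id_in_Aut: "id \<in> Aut L M A"
  unfolding Aut_def automorphism_def by auto

lemma comp_in_Aut:
  assumes \<sigma>: "\<sigma> \<in> Aut L M A" and \<tau>: "\<tau> \<in> Aut L M A"
  shows "\<sigma> \<circ> \<tau> \<in> Aut L M A"
  unfolding Aut_def automorphism_def
proof (intro CollectI conjI allI impI ballI)
  show "bij (\<sigma> \<circ> \<tau>)" using \<sigma> \<tau> bij_comp unfolding Aut_def automorphism_def by blast
next
  fix f and xs :: "'a list" assume l: "length xs = fst L f"
  have "\<tau> (fst M f xs) = fst M f (map \<tau> xs)"
    using \<tau> l unfolding Aut_def automorphism_def by blast
  moreover have "\<sigma> (fst M f (map \<tau> xs)) = fst M f (map \<sigma> (map \<tau> xs))"
    using \<sigma> l unfolding Aut_def automorphism_def by simp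
  ultimately show "(\<sigma> \<circ> \<tau>) (fst M f xs) = fst M f (map (\<sigma> \<circ> \<tau>) xs)" by simp
next
  fix r and xs :: "'a list" assume l: "length xs = snd L r"
  have "snd M r (map \<tau> xs) = snd M r xs"
    using \<tau> l unfolding Aut_def automorphism_def by blast
  moreover have "snd M r (map \<sigma> (map \<tau> xs)) = snd M r (map \<tau> xs)"
    using \<sigma> l unfolding Aut_def automorphism_def by (simp del: map_map)
  ultimately show "snd M r (map (\<sigma> \<circ> \<tau>) xs) = snd M r xs" by simp
next
  fix x assume "x \<in> A"
  thus "(\<sigma> \<circ> \<tau>) x = x" using \<sigma> \<tau> unfolding Aut_def by simp
qed

lemma Aut_inv_eq:
  assumes "\<sigma> \<in> Aut L M A"
  shows "inv \<sigma> (\<sigma> x) = x" "\<sigma> (inv \<sigma> x) = x"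
  using assms unfolding Aut_def automorphism_def by (auto simp: bij_is_inj bij_is_surj surj_f_inv_f)

lemma inv_in_Aut:
  assumes \<sigma>: "\<sigma> \<in> Aut L M A"
  shows "inv \<sigma> \<in> Aut L M A"
  unfolding Aut_def automorphism_def
proof (intro CollectI conjI allI impI ballI)
  show "bij (inv \<sigma>)" using \<sigma> bij_imp_bij_inv unfolding Aut_def automorphism_def by blast
next
  fix f and xs :: "'a list" assume l: "length xs = fst L f"
  have "\<sigma> (fst M f (map (inv \<sigma>) xs)) = fst M f (map \<sigma> (map (inv \<sigma>) xs))"
    using \<sigma> l unfolding Aut_def automorphism_def by simp
  also have "\<dots> = fst M f xs"
    using Aut_inv_eq(2)[OF \<sigma>] by (simp add: map_idI)
  finally show "inv \<sigma> (fst M f xs) = fst M f (map (inv \<sigma>) xs)"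
    using Aut_inv_eq(1)[OF \<sigma>] by metis
next
  fix r and xs :: "'a list" assume l: "length xs = snd L r"
  have "snd M r (map \<sigma> (map (inv \<sigma>) xs)) = snd M r (map (inv \<sigma>) xs)"
    using \<sigma> l unfolding Aut_def automorphism_def by (simp del: map_map)
  thus "snd M r (map (inv \<sigma>) xs) = snd M r xs"
    using Aut_inv_eq(2)[OF \<sigma>] by (simp add: map_idI)
next
  fix x assume "x \<in> A"
  thus "inv \<sigma> x = x" using \<sigma> Aut_inv_eq(1)[OF \<sigma>, of x] unfolding Aut_def by simp
qed

lemma Aut_realizes:
  assumes "\<sigma> \<in> Aut L M E" "\<forall>\<phi>\<in>p. Lfm L E (length a) \<phi>" "realizes M a p"
  shows "realizes M (map \<sigma> a) p"
  using Aut_satT[OF assms(1)] assms(2,3) unfolding realizes_def by simp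

lemma inv_comp_in_Aut:
  assumes \<sigma>: "\<sigma> \<in> Aut L M A" and \<tau>: "\<tau> \<in> Aut L M A" and agree: "\<forall>x\<in>B. \<sigma> x = \<tau> x"
  shows "inv \<tau> \<circ> \<sigma> \<in> Aut L M (A \<union> B)"
proof -
  have "inv \<tau> \<circ> \<sigma> \<in> Aut L M A" using comp_in_Aut[OF inv_in_Aut[OF \<tau>] \<sigma>] .
  moreover have "(inv \<tau> \<circ> \<sigma>) x = x" if "x \<in> B" for x
    using agree that Aut_inv_eq(1)[OF \<tau>] by simp
  ultimately show ?thesis unfolding Aut_def by blast
qed

section \<open>Substitution\<close>

definition fresh_var :: "nat set \<Rightarrow> nat" where
  "fresh_var S = (SOME z. z \<notin> S)"

lemma fresh_var_notin: "finite S \<Longrightarrow> fresh_var S \<notin> S"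
  unfolding fresh_var_def using ex_new_if_finite[OF infinite_UNIV_nat] by (metis someI_ex)

fun subst_t :: "(nat \<Rightarrow> ('f,'a) trm) \<Rightarrow> ('f,'a) trm \<Rightarrow> ('f,'a) trm" where
  "subst_t s (Var i) = s i"
| "subst_t s (Par c) = Par c"
| "subst_t s (Fn f ts) = Fn f (map (subst_t s) ts)"

fun subst_fm :: "(nat \<Rightarrow> ('f,'a) trm) \<Rightarrow> ('f,'r,'a) fm \<Rightarrow> ('f,'r,'a) fm" where
  "subst_fm s (Eq a b) = Eq (subst_t s a) (subst_t s b)"
| "subst_fm s (Rel r ts) = Rel r (map (subst_t s) ts)"
| "subst_fm s (Neg \<phi>) = Neg (subst_fm s \<phi>)"
| "subst_fm s (Conj \<phi> \<psi>) = Conj (subst_fm s \<phi>) (subst_fm s \<psi>)"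
| "subst_fm s (Ex x \<phi>) =
     (let z = fresh_var (\<Union>y\<in>frees \<phi> - {x}. frees_t (s y)) in Ex z (subst_fm (s(x := Var z)) \<phi>))"

lemma subst_fm_Ex:
  obtains z where "z \<notin> (\<Union>y\<in>frees \<phi> - {x}. frees_t (s y))"
    and "subst_fm s (Ex x \<phi>) = Ex z (subst_fm (s(x := Var z)) \<phi>)"
proof -
  let ?S = "\<Union>y\<in>frees \<phi> - {x}. frees_t (s y)"
  have "fresh_var ?S \<notin> ?S" by (rule fresh_var_notin) (simp add: finite_frees finite_frees_t)
  thus thesis using that by (simp add: Let_def)
qed

lemma evalt_subst_t: "evalt F v (subst_t s t) = evalt F (\<lambda>i. evalt F v (s i)) t"
proof (induction t)
  case (Fn f ts)
  hence "map (evalt F v \<circ> subst_t s) ts = map (evalt F (\<lambda>i. evalt F v (s i))) ts" by auto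
  thus ?case by (simp del: map_eq_conv)
qed auto

lemma sat_subst_fm: "sat M v (subst_fm s \<phi>) = sat M (\<lambda>i. evalt (fst M) v (s i)) \<phi>"
proof (induction \<phi> arbitrary: s v)
  case (Rel r ts)
  have "map (evalt (fst M) v \<circ> subst_t s) ts = map (evalt (fst M) (\<lambda>i. evalt (fst M) v (s i))) ts"
    by (auto simp: evalt_subst_t)
  thus ?case by (simp del: map_eq_conv)
next
  case (Ex x \<phi>)
  obtain z where z: "z \<notin> (\<Union>y\<in>frees \<phi> - {x}. frees_t (s y))"
    and eq: "subst_fm s (Ex x \<phi>) = Ex z (subst_fm (s(x := Var z)) \<phi>)"
    by (rule subst_fm_Ex)
  have "sat M (\<lambda>i. evalt (fst M) (v(z := b)) ((s(x := Var z)) i)) \<phi>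
      = sat M ((\<lambda>i. evalt (fst M) v (s i))(x := b)) \<phi>" for b
  proof (rule sat_cong, intro ballI)
    fix i assume i: "i \<in> frees \<phi>"
    show "evalt (fst M) (v(z := b)) ((s(x := Var z)) i) = ((\<lambda>i. evalt (fst M) v (s i))(x := b)) i"
    proof (cases "i = x")
      case False
      hence "z \<notin> frees_t (s i)" using z i by blast
      hence "evalt (fst M) (v(z := b)) (s i) = evalt (fst M) v (s i)" by (intro evalt_cong) auto
      thus ?thesis using False by simp
    qed simp
  qed
  hence "(\<exists>b. sat M (v(z := b)) (subst_fm (s(x := Var z)) \<phi>))
      \<longleftrightarrow> (\<exists>b. sat M ((\<lambda>i. evalt (fst M) v (s i))(x := b)) \<phi>)"
    by (simp only: Ex.IH)
  thus ?case by (simp only: eq sat.simps)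
qed (auto simp: evalt_subst_t)

lemma frees_subst_t: "frees_t (subst_t s t) = (\<Union>y\<in>frees_t t. frees_t (s y))"
  by (induction t) auto

lemma frees_subst_fm: "frees (subst_fm s \<phi>) \<subseteq> (\<Union>y\<in>frees \<phi>. frees_t (s y))"
proof (induction \<phi> arbitrary: s)
  case (Ex x \<phi>)
  obtain z where "z \<notin> (\<Union>y\<in>frees \<phi> - {x}. frees_t (s y))"
    and eq: "subst_fm s (Ex x \<phi>) = Ex z (subst_fm (s(x := Var z)) \<phi>)"
    by (rule subst_fm_Ex)
  have "frees (subst_fm (s(x := Var z)) \<phi>) \<subseteq> (\<Union>y\<in>frees \<phi>. frees_t ((s(x := Var z)) y))"
    by (rule Ex.IH)
  also have "\<dots> \<subseteq> {z} \<union> (\<Union>y\<in>frees \<phi> - {x}. frees_t (s y))"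
    by (auto split: if_split_asm)
  finally show ?case using eq by auto
next
  case (Conj \<phi> \<psi>)
  thus ?case by fastforce
qed (auto simp: frees_subst_t)

lemma params_subst_t: "params_t (subst_t s t) \<subseteq> params_t t \<union> (\<Union>y. params_t (s y))"
  by (induction t) auto

lemma params_subst_fm: "params (subst_fm s \<phi>) \<subseteq> params \<phi> \<union> (\<Union>y. params_t (s y))"
proof (induction \<phi> arbitrary: s)
  case (Eq a b)
  thus ?case using params_subst_t[of s a] params_subst_t[of s b] by auto
next
  case (Rel r ts)
  thus ?case using params_subst_t[of s] by fastforce
next
  case (Ex x \<phi>)
  obtain z where eq: "subst_fm s (Ex x \<phi>) = Ex z (subst_fm (s(x := Var z)) \<phi>)"
    by (rule subst_fm_Ex)
  have "params (subst_fm (s(x := Var z)) \<phi>) \<subseteq> params \<phi> \<union> (\<Union>y. params_t ((s(x := Var z)) y))"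
    by (rule Ex.IH)
  also have "\<dots> \<subseteq> params \<phi> \<union> (\<Union>y. params_t (s y))"
    by (auto split: if_split_asm)
  finally show ?case using eq by auto
qed auto

lemma wft_subst_t: "(\<And>y. wft fa (s y)) \<Longrightarrow> wft fa t \<Longrightarrow> wft fa (subst_t s t)"
  by (induction t) auto

lemma wff_subst_fm: "(\<And>y. wft (fst L) (s y)) \<Longrightarrow> wff L \<phi> \<Longrightarrow> wff L (subst_fm s \<phi>)"
proof (induction \<phi> arbitrary: s)
  case (Ex x \<phi>)
  obtain z where eq: "subst_fm s (Ex x \<phi>) = Ex z (subst_fm (s(x := Var z)) \<phi>)"
    by (rule subst_fm_Ex)
  have "wft (fst L) ((s(x := Var z)) y)" for y using Ex.prems by auto
  thus ?case using eq Ex by auto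
qed (auto simp: wft_subst_t)

lemma Lfm_subst_fm:
  assumes "Lfm L B k \<phi>" "\<forall>y. wft (fst L) (s y)" "\<forall>y. params_t (s y) \<subseteq> A" "B \<subseteq> A"
    "\<forall>y\<in>frees \<phi>. frees_t (s y) \<subseteq> {..<n}"
  shows "Lfm L A n (subst_fm s \<phi>)"
  unfolding Lfm_def
proof (intro conjI)
  show "wff L (subst_fm s \<phi>)" using assms(1,2) by (intro wff_subst_fm) (auto simp: Lfm_def)
  show "params (subst_fm s \<phi>) \<subseteq> A"
    using params_subst_fm[of s \<phi>] assms(1,3,4) unfolding Lfm_def by blast
  show "frees (subst_fm s \<phi>) \<subseteq> {..<n}"
    using frees_subst_fm[of s \<phi>] assms(5) by blast
qed

section \<open>Types and finite satisfiability\<close>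

definition true_fm :: "('f,'r,'a) fm" where
  "true_fm = Ex 0 (Eq (Var 0) (Var 0))"

fun conjs :: "('f,'r,'a) fm list \<Rightarrow> ('f,'r,'a) fm" where
  "conjs [] = true_fm"
| "conjs (\<phi> # l) = Conj \<phi> (conjs l)"

lemma sat_conjs: "sat M v (conjs l) = (\<forall>\<phi>\<in>set l. sat M v \<phi>)"
  by (induction l) (auto simp: true_fm_def)

lemma Lfm_conjs: "\<forall>\<phi>\<in>set l. Lfm L A n \<phi> \<Longrightarrow> Lfm L A n (conjs l)"
  by (induction l) (auto simp: true_fm_def Lfm_def)

lemma Lfm_mono: "Lfm L A n \<phi> \<Longrightarrow> A \<subseteq> B \<Longrightarrow> Lfm L B n \<phi>"
  unfolding Lfm_def by auto

lemma Lfm_Neg[simp]: "Lfm L A n (Neg \<phi>) = Lfm L A n \<phi>"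
  unfolding Lfm_def by simp

definition tp :: "('f,'r) lang \<Rightarrow> ('f,'r,'a) struc \<Rightarrow> 'a set \<Rightarrow> 'a list \<Rightarrow> ('f,'r,'a) fm set" where
  "tp L M A a = {\<phi>. Lfm L A (length a) \<phi> \<and> satT M a \<phi>}"

lemma ctype_tp: "ctype L M A (length a) (tp L M A a)"
  unfolding ctype_def tp_def realizes_def satT_def by auto

lemma subset_tp_of_realizes:
  assumes "realizes M a p" "\<forall>\<phi>\<in>p. Lfm L E (length a) \<phi>" "E \<subseteq> A"
  shows "p \<subseteq> tp L M A a"
  using assms Lfm_mono unfolding realizes_def tp_def by blast

lemma ctype_subset_tp_imp_eq:
  assumes "ctype L M A (length a) q" "q \<subseteq> tp L M A a"
  shows "q = tp L M A a"
proof
  show "tp L M A a \<subseteq> q"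
  proof
    fix \<phi> assume \<phi>: "\<phi> \<in> tp L M A a"
    show "\<phi> \<in> q"
    proof (rule ccontr)
      assume "\<phi> \<notin> q"
      hence "Neg \<phi> \<in> tp L M A a" using assms \<phi> unfolding ctype_def tp_def by blast
      thus False using \<phi> by (simp add: tp_def satT_def)
    qed
  qed
qed (rule assms(2))

lemma realizes_tp_self: "realizes M a (tp L M A a)"
  unfolding realizes_def tp_def by simp

lemma ctype_Lfm: "ctype L M A n p \<Longrightarrow> \<phi> \<in> p \<Longrightarrow> Lfm L A n \<phi>"
  unfolding ctype_def by blast

lemma ctype_realizers_agree:
  assumes "ctype L M E n p" "realizes M a p" "realizes M b p" "Lfm L E n \<phi>"
  shows "satT M a \<phi> \<longleftrightarrow> satT M b \<phi>"
proof -
  have "\<phi> \<in> p \<or> Neg \<phi> \<in> p" using assms(1,4) unfolding ctype_def by blast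
  thus ?thesis using assms(2,3) unfolding realizes_def satT_def by auto
qed

definition fin_sat :: "('f,'r,'a) struc \<Rightarrow> nat \<Rightarrow> ('f,'r,'a) fm set \<Rightarrow> bool" where
  "fin_sat M n Q \<longleftrightarrow> (\<forall>F. finite F \<and> F \<subseteq> Q \<longrightarrow> (\<exists>a. length a = n \<and> realizes M a F))"

lemma fin_sat_insert_or_Neg:
  assumes "fin_sat M n P"
  shows "fin_sat M n (insert \<phi> P) \<or> fin_sat M n (insert (Neg \<phi>) P)"
proof (rule ccontr)
  assume "\<not> ?thesis"
  hence "\<not> fin_sat M n (insert \<phi> P)" "\<not> fin_sat M n (insert (Neg \<phi>) P)" by simp_all
  then obtain F1 F2 where
    F1: "finite F1" "F1 \<subseteq> insert \<phi> P" "\<forall>a. length a = n \<longrightarrow> \<not> realizes M a F1" and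
    F2: "finite F2" "F2 \<subseteq> insert (Neg \<phi>) P" "\<forall>a. length a = n \<longrightarrow> \<not> realizes M a F2"
    unfolding fin_sat_def by meson
  have fin: "finite ((F1 - {\<phi>}) \<union> (F2 - {Neg \<phi>}))" and sub: "(F1 - {\<phi>}) \<union> (F2 - {Neg \<phi>}) \<subseteq> P"
    using F1 F2 by auto
  obtain a where a: "length a = n" "realizes M a ((F1 - {\<phi>}) \<union> (F2 - {Neg \<phi>}))"
    using assms[unfolded fin_sat_def, rule_format, OF conjI[OF fin sub]] by blast
  show False
  proof (cases "satT M a \<phi>")
    case True
    hence "realizes M a F1" using a(2) unfolding realizes_def by auto
    thus False using F1(3) a(1) by blast
  next
    case False
    hence "realizes M a F2" using a(2) unfolding realizes_def satT_def by auto
    thus False using F2(3) a(1) by blast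
  qed
qed

lemma fin_sat_maximal_ext:
  assumes "\<forall>\<phi>\<in>Q. Lfm L A n \<phi>" "fin_sat M n Q"
  obtains P where "Q \<subseteq> P" "\<forall>\<phi>\<in>P. Lfm L A n \<phi>" "fin_sat M n P"
    "\<And>\<phi>. Lfm L A n \<phi> \<Longrightarrow> fin_sat M n (insert \<phi> P) \<Longrightarrow> \<phi> \<in> P"
proof -
  define \<A> where "\<A> = {P. Q \<subseteq> P \<and> (\<forall>\<phi>\<in>P. Lfm L A n \<phi>) \<and> fin_sat M n P}"
  have "\<exists>P\<in>\<A>. \<forall>X\<in>\<A>. P \<subseteq> X \<longrightarrow> X = P"
  proof (rule subset_Zorn_nonempty)
    show "\<A> \<noteq> {}" using assms unfolding \<A>_def by blast
  next
    fix \<C> assume \<C>: "\<C> \<noteq> {}" "subset.chain \<A> \<C>"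
    hence \<C>\<A>: "\<C> \<subseteq> \<A>" unfolding subset.chain_def by blast
    have "fin_sat M n (\<Union>\<C>)"
      unfolding fin_sat_def
    proof (intro allI impI)
      fix F assume F: "finite F \<and> F \<subseteq> \<Union>\<C>"
      then obtain B where B: "B \<in> \<C>" "F \<subseteq> B"
        using finite_subset_Union_chain[OF _ _ \<C>(1) \<C>(2), of F] by blast
      hence "fin_sat M n B" using \<C>\<A> unfolding \<A>_def by blast
      thus "\<exists>a. length a = n \<and> realizes M a F" using B F unfolding fin_sat_def by blast
    qed
    moreover have "Q \<subseteq> \<Union>\<C>" using \<C>(1) \<C>\<A> unfolding \<A>_def by blast
    moreover have "\<forall>\<phi>\<in>\<Union>\<C>. Lfm L A n \<phi>" using \<C>\<A> unfolding \<A>_def by blast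
    ultimately show "\<Union>\<C> \<in> \<A>" unfolding \<A>_def by blast
  qed
  then obtain P where "P \<in> \<A>" and max: "\<And>X. X \<in> \<A> \<Longrightarrow> P \<subseteq> X \<Longrightarrow> X = P"
    by blast
  moreover have "\<phi> \<in> P" if "Lfm L A n \<phi>" "fin_sat M n (insert \<phi> P)" for \<phi>
  proof -
    have "insert \<phi> P \<in> \<A>" using \<open>P \<in> \<A>\<close> that unfolding \<A>_def by blast
    hence "insert \<phi> P = P" using max by blast
    thus ?thesis by blast
  qed
  ultimately show ?thesis using that unfolding \<A>_def by blast
qed

lemma fin_sat_imp_ctype_ext:
  assumes "\<forall>\<phi>\<in>Q. Lfm L A n \<phi>" "fin_sat M n Q"
  shows "\<exists>p. ctype L M A n p \<and> Q \<subseteq> p"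
proof -
  obtain P where P: "Q \<subseteq> P" "\<forall>\<phi>\<in>P. Lfm L A n \<phi>" "fin_sat M n P"
    and max: "\<And>\<phi>. Lfm L A n \<phi> \<Longrightarrow> fin_sat M n (insert \<phi> P) \<Longrightarrow> \<phi> \<in> P"
    using fin_sat_maximal_ext[OF assms] by blast
  have "\<phi> \<in> P \<or> Neg \<phi> \<in> P" if "Lfm L A n \<phi>" for \<phi>
    using fin_sat_insert_or_Neg[OF P(3), of \<phi>] max[of \<phi>] max[of "Neg \<phi>"] that by auto
  moreover have "\<forall>F. finite F \<and> F \<subseteq> P \<longrightarrow> (\<exists>a. length a = n \<and> realizes M a F)"
    using P(3) unfolding fin_sat_def .
  ultimately have "ctype L M A n P" using P(2) unfolding ctype_def by blast
  thus ?thesis using P(1) by blast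
qed

lemma fin_sat_tp_avoiding:
  assumes escape: "\<forall>\<theta>. Lfm L A 1 \<theta> \<and> satT M [b] \<theta> \<longrightarrow> (\<exists>c. c \<notin> F \<and> satT M [c] \<theta>)"
  shows "fin_sat M 1 (tp L M A [b] \<union> {Neg (Eq (Var 0) (Par f)) | f. f \<in> F})"
  unfolding fin_sat_def
proof (intro allI impI)
  fix G assume G: "finite G \<and> G \<subseteq> tp L M A [b] \<union> {Neg (Eq (Var 0) (Par f)) | f. f \<in> F}"
  hence "finite (G \<inter> tp L M A [b])" by blast
  then obtain l where l: "set l = G \<inter> tp L M A [b]" using finite_list by blast
  have "Lfm L A 1 (conjs l)" using l by (intro Lfm_conjs) (auto simp: tp_def)
  moreover have "satT M [b] (conjs l)" using l by (auto simp: tp_def satT_def sat_conjs)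
  ultimately obtain c where c: "c \<notin> F" "satT M [c] (conjs l)" using escape by blast
  have "satT M [c] \<phi>" if \<phi>: "\<phi> \<in> G" for \<phi>
  proof (cases "\<phi> \<in> tp L M A [b]")
    case True
    thus ?thesis using c(2) l \<phi> by (auto simp: satT_def sat_conjs)
  next
    case False
    then obtain f where "f \<in> F" "\<phi> = Neg (Eq (Var 0) (Par f))" using G \<phi> by auto
    thus ?thesis using c(1) by (auto simp: satT_def)
  qed
  thus "\<exists>a. length a = 1 \<and> realizes M a G" unfolding realizes_def by (intro exI[of _ "[c]"]) simp
qed

section \<open>Partial elementary maps\<close>

definition index_in :: "'a list \<Rightarrow> 'a \<Rightarrow> nat" where
  "index_in a x = (SOME i. i < length a \<and> a ! i = x)"

lemma index_in: "x \<in> set a \<Longrightarrow> index_in a x < length a \<and> a ! index_in a x = x"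
  unfolding index_in_def by (rule someI_ex) (simp add: in_set_conv_nth)

lemma same_type_partial_map:
  assumes la: "length a = n" and lb: "length b = n"
    and same: "\<forall>\<phi>. Lfm L A n \<phi> \<longrightarrow> (satT M a \<phi> \<longleftrightarrow> satT M b \<phi>)"
  shows "\<exists>g. (\<forall>x\<in>A. g x = x) \<and> map g a = b"
proof -
  define g where "g x = (if x \<in> A then x else b ! index_in a x)" for x
  have "g (a ! i) = b ! i" if i: "i < n" for i
  proof (cases "a ! i \<in> A")
    case True
    have "Lfm L A n (Eq (Var i) (Par (a ! i)))" using True i by (simp add: Lfm_def)
    moreover have "satT M a (Eq (Var i) (Par (a ! i)))" by (simp add: satT_def)
    ultimately have "satT M b (Eq (Var i) (Par (a ! i)))" using same by blast
    hence "b ! i = a ! i" by (simp add: satT_def)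
    thus ?thesis using True by (simp add: g_def)
  next
    case False
    let ?j = "index_in a (a ! i)"
    have j: "?j < n" "a ! ?j = a ! i" using index_in[of "a ! i" a] i la by simp_all
    hence "Lfm L A n (Eq (Var i) (Var ?j))" "satT M a (Eq (Var i) (Var ?j))"
      using i by (simp_all add: Lfm_def satT_def)
    hence "satT M b (Eq (Var i) (Var ?j))" using same by blast
    hence "b ! i = b ! ?j" by (simp add: satT_def)
    thus ?thesis using False by (simp add: g_def)
  qed
  hence "map g a = b" using la lb by (simp add: list_eq_iff_nth_eq)
  moreover have "\<forall>x\<in>A. g x = x" by (simp add: g_def)
  ultimately show ?thesis by blast
qed

definition elementary_on :: "('f,'r) lang \<Rightarrow> ('f,'r,'a) struc \<Rightarrow> 'a set \<Rightarrow> ('a \<Rightarrow> 'a) \<Rightarrow> bool" where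
  "elementary_on L M D g \<longleftrightarrow>
     (\<forall>\<phi> xs. set xs \<subseteq> D \<and> Lfm L {} (length xs) \<phi> \<longrightarrow> (satT M xs \<phi> \<longleftrightarrow> satT M (map g xs) \<phi>))"

text \<open>A formula about a tuple xs from A \<union> set a becomes a formula over A about a by substituting
  the parameter xs ! j or the variable of an index of xs ! j in a for the variable j.\<close>
lemma same_type_elementary_on:
  fixes L :: "('f,'r) lang" and M :: "('f,'r,'a) struc"
  assumes la: "length a = n"
    and same: "\<forall>\<phi>. Lfm L A n \<phi> \<longrightarrow> (satT M a \<phi> \<longleftrightarrow> satT M b \<phi>)"
    and gA: "\<forall>x\<in>A. g x = x" and gab: "map g a = b"
  shows "elementary_on L M (A \<union> set a) g"
  unfolding elementary_on_def
proof (intro allI impI)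
  fix \<phi> :: "('f,'r,'a) fm" and xs
  assume H: "set xs \<subseteq> A \<union> set a \<and> Lfm L {} (length xs) \<phi>"
  define s :: "nat \<Rightarrow> ('f,'a) trm"
    where "s j = (if xs ! j \<in> A then Par (xs ! j) else Var (index_in a (xs ! j)))" for j
  have in_a: "xs ! y \<in> set a" if "y \<in> frees \<phi>" "xs ! y \<notin> A" for y
  proof -
    have "y < length xs" using H that(1) unfolding Lfm_def by auto
    thus ?thesis using H that(2) nth_mem by blast
  qed
  have "index_in a (xs ! y) < n" if "y \<in> frees \<phi>" "xs ! y \<notin> A" for y
    using index_in[OF in_a[OF that]] la by simp
  hence "Lfm L A n (subst_fm s \<phi>)"
    using H by (intro Lfm_subst_fm[of _ "{}"]) (auto simp: s_def)
  moreover have "evalt (fst M) ((!) a) (s y) = xs ! y" if "y \<in> frees \<phi>" for y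
    using index_in[OF in_a[OF that]] by (auto simp: s_def)
  hence "satT M a (subst_fm s \<phi>) = satT M xs \<phi>"
    unfolding satT_def sat_subst_fm by (intro sat_cong) simp
  moreover have "evalt (fst M) ((!) b) (s y) = map g xs ! y" if "y \<in> frees \<phi>" for y
  proof -
    have "y < length xs" using H that unfolding Lfm_def by auto
    moreover have "b ! index_in a (xs ! y) = g (xs ! y)" if "xs ! y \<in> set a"
      using index_in[OF that] gab by (metis nth_map)
    ultimately show ?thesis using in_a[OF that] gA by (auto simp: s_def)
  qed
  hence "satT M b (subst_fm s \<phi>) = satT M (map g xs) \<phi>"
    unfolding satT_def sat_subst_fm by (intro sat_cong) simp
  ultimately show "satT M xs \<phi> \<longleftrightarrow> satT M (map g xs) \<phi>" using same by blast
qed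

section \<open>Closure operators, orbits and codes\<close>

lemma subset_dcl: "A \<subseteq> dcl L M A"
proof
  fix e assume "e \<in> A"
  hence "Lfm L A 1 (Eq (Var 0) (Par e)) \<and> {c. satT M [c] (Eq (Var 0) (Par e))} = {e}"
    by (auto simp: Lfm_def satT_def)
  thus "e \<in> dcl L M A" unfolding dcl_def by (intro CollectI exI)
qed

lemma dcl_mono:
  assumes "A \<subseteq> B"
  shows "dcl L M A \<subseteq> dcl L M B"
proof
  fix b assume "b \<in> dcl L M A"
  then obtain \<phi> where "Lfm L A 1 \<phi>" "{c. satT M [c] \<phi>} = {b}" unfolding dcl_def by auto
  hence "Lfm L B 1 \<phi> \<and> {c. satT M [c] \<phi>} = {b}" using Lfm_mono assms by blast
  thus "b \<in> dcl L M B" unfolding dcl_def by (intro CollectI exI)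
qed

lemma dcl_subset_acl: "dcl L M A \<subseteq> acl L M A"
proof
  fix b assume "b \<in> dcl L M A"
  then obtain \<phi> where "Lfm L A 1 \<phi>" "{c. satT M [c] \<phi>} = {b}" unfolding dcl_def by auto
  hence "Lfm L A 1 \<phi> \<and> finite {c. satT M [c] \<phi>} \<and> b \<in> {c. satT M [c] \<phi>}" by simp
  thus "b \<in> acl L M A" unfolding acl_def by (intro CollectI exI)
qed

lemma subset_acl: "A \<subseteq> acl L M A"
  using subset_dcl dcl_subset_acl by (rule subset_trans)

lemma acl_stationary_tp_eq:
  assumes st: "acl_stationary L M E n p" and ctp: "ctype L M E n p"
    and a: "length a = n" "realizes M a p" and b: "length b = n" "realizes M b p"
  shows "tp L M (acl L M E) a = tp L M (acl L M E) b"
proof -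
  have "ctype L M (acl L M E) n (tp L M (acl L M E) x) \<and> p \<subseteq> tp L M (acl L M E) x"
    if "length x = n" "realizes M x p" for x
  proof -
    have "\<forall>\<phi>\<in>p. Lfm L E (length x) \<phi>" using ctp that(1) ctype_Lfm by blast
    thus ?thesis using ctype_tp[of L M "acl L M E" x] subset_tp_of_realizes[OF that(2) _ subset_acl] that(1)
      by simp
  qed
  thus ?thesis using st a b unfolding acl_stationary_def by (metis (no_types, lifting))
qed

lemma dcl_fixed_by_Aut:
  assumes "b \<in> dcl L M A" "\<sigma> \<in> Aut L M A"
  shows "\<sigma> b = b"
proof -
  obtain \<psi> where \<psi>: "Lfm L A 1 \<psi>" "{c. satT M [c] \<psi>} = {b}" using assms(1) unfolding dcl_def by auto
  have "satT M [b] \<psi>" using \<psi>(2) by blast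
  hence "satT M [\<sigma> b] \<psi>" using Aut_satT[OF assms(2), of "[b]" \<psi>] \<psi>(1) by simp
  thus ?thesis using \<psi>(2) by blast
qed

lemma acl_finite_orbit:
  assumes "b \<in> acl L M A"
  shows "finite ((\<lambda>\<sigma>. \<sigma> b) ` Aut L M A)"
proof -
  obtain \<psi> where \<psi>: "Lfm L A 1 \<psi>" "finite {c. satT M [c] \<psi>}" "satT M [b] \<psi>"
    using assms unfolding acl_def by auto
  have "(\<lambda>\<sigma>. \<sigma> b) ` Aut L M A \<subseteq> {c. satT M [c] \<psi>}"
  proof
    fix c assume "c \<in> (\<lambda>\<sigma>. \<sigma> b) ` Aut L M A"
    then obtain \<sigma> where "\<sigma> \<in> Aut L M A" "c = \<sigma> b" by blast
    thus "c \<in> {c. satT M [c] \<psi>}" using Aut_satT[of \<sigma> L M A "[b]" \<psi>] \<psi>(1,3) by simp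
  qed
  thus ?thesis using \<psi>(2) finite_subset by blast
qed

lemma finite_image_factor:
  assumes "finite (g ` G)" and "\<And>x y. x \<in> G \<Longrightarrow> y \<in> G \<Longrightarrow> g x = g y \<Longrightarrow> h x = h y"
  shows "finite (h ` G)"
proof -
  define r where "r z = (SOME x. x \<in> G \<and> g x = z)" for z
  have "h x = h (r (g x))" if "x \<in> G" for x
  proof -
    have "r (g x) \<in> G \<and> g (r (g x)) = g x"
      using someI[of "\<lambda>y. y \<in> G \<and> g y = g x" x] that unfolding r_def by blast
    thus ?thesis using assms(2)[of x "r (g x)"] that by simp
  qed
  hence "h ` G = (\<lambda>z. h (r z)) ` g ` G" unfolding image_image by (rule image_cong[OF refl])
  thus ?thesis using assms(1) by simp
qed

lemma finite_list_orbit: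
  assumes "set c \<subseteq> acl L M E"
  shows "finite ((\<lambda>\<sigma>. map \<sigma> c) ` Aut L M E)"
proof -
  define W where "W = (\<Union>y\<in>set c. (\<lambda>\<sigma>. \<sigma> y) ` Aut L M E)"
  have "finite W" unfolding W_def
  proof (rule finite_UN_I)
    fix y assume "y \<in> set c"
    thus "finite ((\<lambda>\<sigma>. \<sigma> y) ` Aut L M E)" using assms by (intro acl_finite_orbit) blast
  qed simp
  moreover have "(\<lambda>\<sigma>. map \<sigma> c) ` Aut L M E \<subseteq> {l. set l \<subseteq> W \<and> length l = length c}"
  proof
    fix l assume "l \<in> (\<lambda>\<sigma>. map \<sigma> c) ` Aut L M E"
    then obtain \<sigma> where "\<sigma> \<in> Aut L M E" "l = map \<sigma> c" by blast
    thus "l \<in> {l. set l \<subseteq> W \<and> length l = length c}" unfolding W_def by auto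
  qed
  ultimately show ?thesis using finite_subset[OF _ finite_lists_length_eq] by blast
qed

definition satisfying_conjugates ::
    "('f,'r) lang \<Rightarrow> ('f,'r,'a) struc \<Rightarrow> 'a set \<Rightarrow> ('f,'r,'a) fm \<Rightarrow> 'a list \<Rightarrow> 'a list \<Rightarrow> 'a list set" where
  "satisfying_conjugates L M E \<phi> c x = {map \<tau> c | \<tau>. \<tau> \<in> Aut L M E \<and> satT M x (map_params \<tau> \<phi>)}"

lemma satisfying_conjugates_subset_orbit:
  "satisfying_conjugates L M E \<phi> c x \<subseteq> (\<lambda>\<tau>. map \<tau> c) ` Aut L M E"
  unfolding satisfying_conjugates_def by blast

lemma self_in_satisfying_conjugates_iff:
  assumes "set c = params \<phi>"
  shows "c \<in> satisfying_conjugates L M E \<phi> c x \<longleftrightarrow> satT M x \<phi>"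
proof
  assume "c \<in> satisfying_conjugates L M E \<phi> c x"
  then obtain \<tau> where "satT M x (map_params \<tau> \<phi>)" "map \<tau> c = c"
    unfolding satisfying_conjugates_def by auto
  moreover have "\<tau> y = y" if "map \<tau> c = c" "y \<in> params \<phi>" for y
    using that assms map_eq_conv[of \<tau> c id] by auto
  ultimately show "satT M x \<phi>" using map_params_id_on by metis
next
  assume "satT M x \<phi>"
  hence "c = map id c \<and> id \<in> Aut L M E \<and> satT M x (map_params id \<phi>)"
    using id_in_Aut map_params_id_on[of \<phi> id] by simp
  thus "c \<in> satisfying_conjugates L M E \<phi> c x" unfolding satisfying_conjugates_def by blast
qed

lemma satisfying_conjugates_Aut:
  assumes \<sigma>: "\<sigma> \<in> Aut L M E" and \<phi>: "wff L \<phi>" "frees \<phi> \<subseteq> {..<length x}"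
  shows "map \<sigma> ` satisfying_conjugates L M E \<phi> c x = satisfying_conjugates L M E \<phi> c (map \<sigma> x)"
proof -
  have sat_iff: "satT M (map \<sigma> x) (map_params (\<sigma> \<circ> \<tau>) \<phi>) = satT M x (map_params \<tau> \<phi>)" for \<tau>
    using automorphism_satT[of L M \<sigma> "map_params \<tau> \<phi>" x] \<sigma> \<phi> unfolding Aut_def by simp
  show ?thesis
  proof
    show "map \<sigma> ` satisfying_conjugates L M E \<phi> c x \<subseteq> satisfying_conjugates L M E \<phi> c (map \<sigma> x)"
    proof
      fix y assume "y \<in> map \<sigma> ` satisfying_conjugates L M E \<phi> c x"
      then obtain \<tau> where \<tau>: "\<tau> \<in> Aut L M E" "satT M x (map_params \<tau> \<phi>)" "y = map \<sigma> (map \<tau> c)"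
        unfolding satisfying_conjugates_def by blast
      hence "y = map (\<sigma> \<circ> \<tau>) c \<and> \<sigma> \<circ> \<tau> \<in> Aut L M E \<and> satT M (map \<sigma> x) (map_params (\<sigma> \<circ> \<tau>) \<phi>)"
        using comp_in_Aut[OF \<sigma> \<tau>(1)] sat_iff by simp
      thus "y \<in> satisfying_conjugates L M E \<phi> c (map \<sigma> x)"
        unfolding satisfying_conjugates_def by blast
    qed
  next
    show "satisfying_conjugates L M E \<phi> c (map \<sigma> x) \<subseteq> map \<sigma> ` satisfying_conjugates L M E \<phi> c x"
    proof
      fix y assume "y \<in> satisfying_conjugates L M E \<phi> c (map \<sigma> x)"
      then obtain \<tau> where \<tau>: "\<tau> \<in> Aut L M E" "satT M (map \<sigma> x) (map_params \<tau> \<phi>)" "y = map \<tau> c"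
        unfolding satisfying_conjugates_def by blast
      have "\<sigma> \<circ> (inv \<sigma> \<circ> \<tau>) = \<tau>" using Aut_inv_eq(2)[OF \<sigma>] by (simp add: fun_eq_iff)
      moreover have "inv \<sigma> \<circ> \<tau> \<in> Aut L M E" using comp_in_Aut[OF inv_in_Aut[OF \<sigma>] \<tau>(1)] .
      ultimately have "map (inv \<sigma> \<circ> \<tau>) c = map (inv \<sigma> \<circ> \<tau>) c \<and> inv \<sigma> \<circ> \<tau> \<in> Aut L M E
          \<and> satT M x (map_params (inv \<sigma> \<circ> \<tau>) \<phi>)"
        using \<tau>(2) sat_iff[of "inv \<sigma> \<circ> \<tau>"] by simp
      hence "map (inv \<sigma> \<circ> \<tau>) c \<in> satisfying_conjugates L M E \<phi> c x"
        unfolding satisfying_conjugates_def by blast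
      moreover have "y = map \<sigma> (map (inv \<sigma> \<circ> \<tau>) c)" using \<tau>(3) Aut_inv_eq(2)[OF \<sigma>] by simp
      ultimately show "y \<in> map \<sigma> ` satisfying_conjugates L M E \<phi> c x" by blast
    qed
  qed
qed

lemma finite_satisfying_conjugates_orbit:
  assumes "set c \<subseteq> acl L M E" "wff L \<phi>" "frees \<phi> \<subseteq> {..<length x}"
  shows "finite ((\<lambda>\<sigma>. map \<sigma> ` satisfying_conjugates L M E \<phi> c x) ` Aut L M E)"
proof (rule finite_subset)
  show "(\<lambda>\<sigma>. map \<sigma> ` satisfying_conjugates L M E \<phi> c x) ` Aut L M E \<subseteq> Pow ((\<lambda>\<sigma>. map \<sigma> c) ` Aut L M E)"
  proof
    fix Y assume "Y \<in> (\<lambda>\<sigma>. map \<sigma> ` satisfying_conjugates L M E \<phi> c x) ` Aut L M E"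
    then obtain \<sigma> where "\<sigma> \<in> Aut L M E" "Y = map \<sigma> ` satisfying_conjugates L M E \<phi> c x" by blast
    hence "Y = satisfying_conjugates L M E \<phi> c (map \<sigma> x)"
      using satisfying_conjugates_Aut assms(2,3) by blast
    thus "Y \<in> Pow ((\<lambda>\<sigma>. map \<sigma> c) ` Aut L M E)"
      using satisfying_conjugates_subset_orbit[of L M E \<phi> c "map \<sigma> x"] by blast
  qed
  show "finite (Pow ((\<lambda>\<sigma>. map \<sigma> c) ` Aut L M E))" using finite_list_orbit[OF assms(1)] by simp
qed

lemma map_eq_self_imp_fixed: "map f xs = xs \<Longrightarrow> x \<in> set xs \<Longrightarrow> f x = x"
  by (induction xs) auto

lemma code_fixed_iff:
  assumes "is_code L M d S" "\<sigma> \<in> Aut L M A"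
  shows "map \<sigma> d = d \<longleftrightarrow> map \<sigma> ` S = S"
  using assms unfolding is_code_def Aut_def by simp

section \<open>The monster model\<close>

lemma small_finite:
  assumes "Card_order k" "infinite (Field k)" "finite B"
  shows "small k B"
proof -
  have "(card_of B, card_of (Field k)) \<in> ordLess"
    using assms by (meson card_of_Well_order card_of_ordLeq_finite not_ordLeq_iff_ordLess)
  thus ?thesis
    unfolding small_def using card_of_Field_ordIso[OF assms(1)] ordLess_ordIso_trans by blast
qed

lemma small_Un:
  assumes "Card_order k" "infinite (Field k)" "small k A" "small k B"
  shows "small k (A \<union> B)"
  using assms card_of_Un_ordLess_infinite_Field unfolding small_def by blast

locale monster_model =
  fixes L :: "('f,'r) lang" and M :: "('f,'r,'a) struc" and \<kappa> :: "'k rel"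
  assumes monster: "monster L M \<kappa>"
begin

lemma small_Un_finite:
  assumes "small \<kappa> A" "finite B"
  shows "small \<kappa> (A \<union> B)"
proof -
  have "Card_order \<kappa>" "infinite (Field \<kappa>)" using monster unfolding monster_def by blast+
  thus ?thesis using assms small_Un small_finite by blast
qed

lemma realize_ctype: "small \<kappa> A \<Longrightarrow> ctype L M A n p \<Longrightarrow> \<exists>a. length a = n \<and> realizes M a p"
  using monster unfolding monster_def by blast

lemma elementary_on_extends_to_automorphism:
  "small \<kappa> D \<Longrightarrow> elementary_on L M D g \<Longrightarrow> \<exists>\<sigma>. automorphism L M \<sigma> \<and> (\<forall>x\<in>D. \<sigma> x = g x)"
  using monster unfolding monster_def elementary_on_def by blast

lemma realize_fin_sat:
  assumes "small \<kappa> A" "\<forall>\<phi>\<in>Q. Lfm L A n \<phi>" "fin_sat M n Q"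
  shows "\<exists>a. length a = n \<and> realizes M a Q"
proof -
  obtain p where "ctype L M A n p" "Q \<subseteq> p" using fin_sat_imp_ctype_ext assms(2,3) by blast
  thus ?thesis using realize_ctype[OF assms(1)] unfolding realizes_def by blast
qed

lemma same_type_Aut:
  assumes sA: "small \<kappa> A" and la: "length a = n" and lb: "length b = n"
    and same: "\<forall>\<phi>. Lfm L A n \<phi> \<longrightarrow> (satT M a \<phi> \<longleftrightarrow> satT M b \<phi>)"
  shows "\<exists>\<sigma>\<in>Aut L M A. map \<sigma> a = b"
proof -
  obtain g where g: "\<forall>x\<in>A. g x = x" "map g a = b"
    using same_type_partial_map[OF la lb same] by blast
  have "small \<kappa> (A \<union> set a)" using small_Un_finite[OF sA] by blast
  then obtain \<sigma> where \<sigma>: "automorphism L M \<sigma>" "\<forall>x\<in>A \<union> set a. \<sigma> x = g x"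
    using elementary_on_extends_to_automorphism same_type_elementary_on[OF la same g] by blast
  have "\<sigma> \<in> Aut L M A" using \<sigma> g(1) unfolding Aut_def by auto
  moreover have "map \<sigma> a = map g a" using \<sigma>(2) by simp
  ultimately show ?thesis using g(2) by auto
qed

lemma Aut_moves_outside_finite:
  assumes sA: "small \<kappa> A" and fF: "finite F"
    and escape: "\<forall>\<theta>. Lfm L A 1 \<theta> \<and> satT M [b] \<theta> \<longrightarrow> (\<exists>c. c \<notin> F \<and> satT M [c] \<theta>)"
  shows "\<exists>\<sigma>\<in>Aut L M A. \<sigma> b \<notin> F"
proof -
  define Q where "Q = tp L M A [b] \<union> {Neg (Eq (Var 0) (Par f)) | f. f \<in> F}"
  have "\<forall>\<phi>\<in>Q. Lfm L (A \<union> F) 1 \<phi>" unfolding Q_def tp_def by (auto simp: Lfm_def)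
  moreover have "fin_sat M 1 Q" unfolding Q_def using escape by (rule fin_sat_tp_avoiding)
  ultimately obtain a where a: "length a = 1" "realizes M a Q"
    using realize_fin_sat[OF small_Un_finite[OF sA fF]] by blast
  then obtain c where c: "a = [c]" by (metis One_nat_def length_0_conv length_Suc_conv)
  have "c \<notin> F"
  proof
    assume "c \<in> F"
    hence "Neg (Eq (Var 0) (Par c)) \<in> Q" unfolding Q_def by blast
    thus False using a(2) c unfolding realizes_def by (auto simp: satT_def)
  qed
  moreover have "realizes M [c] (tp L M A [b])" using a(2) c unfolding Q_def realizes_def by blast
  hence "\<forall>\<phi>. Lfm L A 1 \<phi> \<longrightarrow> (satT M [b] \<phi> \<longleftrightarrow> satT M [c] \<phi>)"
    using ctype_realizers_agree[OF ctype_tp realizes_tp_self] by fastforce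
  then obtain \<sigma> where "\<sigma> \<in> Aut L M A" "map \<sigma> [b] = [c]"
    using same_type_Aut[OF sA, of "[b]" 1 "[c]"] by auto
  ultimately show ?thesis by auto
qed

lemma dcl_iff_fixed_by_Aut:
  assumes sA: "small \<kappa> A"
  shows "b \<in> dcl L M A \<longleftrightarrow> (\<forall>\<sigma>\<in>Aut L M A. \<sigma> b = b)"
proof
  show "\<forall>\<sigma>\<in>Aut L M A. \<sigma> b = b" if "b \<in> dcl L M A" using dcl_fixed_by_Aut[OF that] by blast
next
  assume fixed: "\<forall>\<sigma>\<in>Aut L M A. \<sigma> b = b"
  show "b \<in> dcl L M A"
  proof (rule ccontr)
    assume nb: "b \<notin> dcl L M A"
    have "\<exists>c. c \<notin> {b} \<and> satT M [c] \<theta>" if \<theta>: "Lfm L A 1 \<theta>" "satT M [b] \<theta>" for \<theta>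
    proof (rule ccontr)
      assume "\<not> ?thesis"
      hence "Lfm L A 1 \<theta> \<and> {c. satT M [c] \<theta>} = {b}" using \<theta> by auto
      hence "b \<in> dcl L M A" unfolding dcl_def by (intro CollectI exI)
      thus False using nb by contradiction
    qed
    then obtain \<sigma> where "\<sigma> \<in> Aut L M A" "\<sigma> b \<notin> {b}"
      using Aut_moves_outside_finite[OF sA, of "{b}" b] by blast
    thus False using fixed by blast
  qed
qed

lemma acl_iff_finite_orbit:
  assumes sA: "small \<kappa> A"
  shows "b \<in> acl L M A \<longleftrightarrow> finite ((\<lambda>\<sigma>. \<sigma> b) ` Aut L M A)"
proof
  show "finite ((\<lambda>\<sigma>. \<sigma> b) ` Aut L M A)" if "b \<in> acl L M A" using that by (rule acl_finite_orbit)
next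
  let ?O = "(\<lambda>\<sigma>. \<sigma> b) ` Aut L M A"
  assume fin: "finite ?O"
  show "b \<in> acl L M A"
  proof (rule ccontr)
    assume nb: "b \<notin> acl L M A"
    have "\<exists>c. c \<notin> ?O \<and> satT M [c] \<theta>" if \<theta>: "Lfm L A 1 \<theta>" "satT M [b] \<theta>" for \<theta>
    proof -
      have "infinite {c. satT M [c] \<theta>}"
      proof
        assume "finite {c. satT M [c] \<theta>}"
        hence "Lfm L A 1 \<theta> \<and> finite {c. satT M [c] \<theta>} \<and> b \<in> {c. satT M [c] \<theta>}" using \<theta> by simp
        hence "b \<in> acl L M A" unfolding acl_def by (intro CollectI exI)
        thus False using nb by contradiction
      qed
      hence "infinite ({c. satT M [c] \<theta>} - ?O)" using fin by (rule Diff_infinite_finite[rotated])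
      then obtain c where "c \<in> {c. satT M [c] \<theta>} - ?O" by (metis ex_in_conv finite.emptyI)
      thus ?thesis by blast
    qed
    then obtain \<sigma> where "\<sigma> \<in> Aut L M A" "\<sigma> b \<notin> ?O"
      using Aut_moves_outside_finite[OF sA fin, of b] by blast
    thus False by blast
  qed
qed

lemma dcl_dcl:
  assumes sA: "small \<kappa> A"
  shows "dcl L M (dcl L M A) = dcl L M A"
proof
  show "dcl L M (dcl L M A) \<subseteq> dcl L M A"
  proof
    fix b assume b: "b \<in> dcl L M (dcl L M A)"
    have "\<sigma> \<in> Aut L M (dcl L M A)" if "\<sigma> \<in> Aut L M A" for \<sigma>
      using that dcl_fixed_by_Aut[of _ L M A \<sigma>] unfolding Aut_def by blast
    thus "b \<in> dcl L M A" using dcl_fixed_by_Aut[OF b] dcl_iff_fixed_by_Aut[OF sA] by blast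
  qed
qed (rule subset_dcl)

lemma realize_ctype_restriction:
  assumes "small \<kappa> B" "ctype L M A n q"
  shows "\<exists>a. length a = n \<and> realizes M a {\<psi>\<in>q. Lfm L B n \<psi>}"
proof -
  have fs: "\<forall>F. finite F \<and> F \<subseteq> q \<longrightarrow> (\<exists>a. length a = n \<and> realizes M a F)"
    using assms(2) unfolding ctype_def by blast
  have "fin_sat M n {\<psi>\<in>q. Lfm L B n \<psi>}"
    unfolding fin_sat_def
  proof (intro allI impI)
    fix F assume "finite F \<and> F \<subseteq> {\<psi>\<in>q. Lfm L B n \<psi>}"
    hence "finite F \<and> F \<subseteq> q" by blast
    thus "\<exists>a. length a = n \<and> realizes M a F" using fs by blast
  qed
  thus ?thesis using realize_fin_sat[OF assms(1), of "{\<psi>\<in>q. Lfm L B n \<psi>}"] by blast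
qed

lemma primary_dcl_iff:
  assumes sX: "small \<kappa> X" and EX: "E \<subseteq> X"
  shows "primary L M E (dcl L M X) \<longleftrightarrow> dcl L M X \<inter> acl L M E \<subseteq> dcl L M E"
proof -
  have E: "E \<subseteq> dcl L M X" using subset_trans[OF EX subset_dcl] .
  have D: "dcl L M E \<subseteq> dcl L M X \<inter> acl L M E"
    using dcl_mono[OF EX] dcl_subset_acl by (rule Int_greatest)
  show ?thesis unfolding primary_def dcl_dcl[OF sX]
  proof
    assume "dcl L M X \<inter> acl L M E \<subseteq> dcl L M E"
    thus "E \<subseteq> dcl L M X \<and> dcl L M X \<inter> acl L M E = dcl L M E"
      using E D by (intro conjI subset_antisym)
  qed simp
qed

lemma acl_stationary_imp_primary:
  assumes sE: "small \<kappa> E" and ctp: "ctype L M E n p" and st: "acl_stationary L M E n p"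
    and a: "length a = n" "realizes M a p"
  shows "primary L M E (dcl L M (E \<union> set a))"
proof -
  have pL: "\<forall>\<phi>\<in>p. Lfm L E (length a) \<phi>" using ctype_Lfm[OF ctp] a(1) by simp
  have "b \<in> dcl L M E" if b: "b \<in> dcl L M (E \<union> set a)" "b \<in> acl L M E" for b
    unfolding dcl_iff_fixed_by_Aut[OF sE]
  proof
    fix \<sigma> assume \<sigma>: "\<sigma> \<in> Aut L M E"
    have a': "length (map \<sigma> a) = n" "realizes M (map \<sigma> a) p"
      using a Aut_realizes[OF \<sigma> pL a(2)] by simp_all
    have tp_eq: "tp L M (acl L M E) a = tp L M (acl L M E) (map \<sigma> a)"
      using acl_stationary_tp_eq[OF st ctp a a'] .
    have same: "\<forall>\<phi>. Lfm L (insert b E) n \<phi> \<longrightarrow> (satT M a \<phi> \<longleftrightarrow> satT M (map \<sigma> a) \<phi>)"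
    proof (intro allI impI)
      fix \<phi> assume \<phi>: "Lfm L (insert b E) n \<phi>"
      have "insert b E \<subseteq> acl L M E" using b(2) subset_acl[of E L M] by blast
      hence "Lfm L (acl L M E) n \<phi>" by (rule Lfm_mono[OF \<phi>])
      moreover have "\<phi> \<in> tp L M (acl L M E) a \<longleftrightarrow> \<phi> \<in> tp L M (acl L M E) (map \<sigma> a)"
        using tp_eq by simp
      ultimately show "satT M a \<phi> \<longleftrightarrow> satT M (map \<sigma> a) \<phi>" using a(1) by (simp add: tp_def)
    qed
    have "small \<kappa> (insert b E)" using small_Un_finite[OF sE, of "{b}"] by simp
    then obtain \<tau> where \<tau>: "\<tau> \<in> Aut L M (insert b E)" "map \<tau> a = map \<sigma> a"
      using same_type_Aut[OF _ a(1) a'(1) same] by blast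
    have \<tau>E: "\<tau> \<in> Aut L M E" using \<tau>(1) Aut_antimono[of E "insert b E"] by blast
    have "\<forall>x\<in>set a. \<sigma> x = \<tau> x" using \<tau>(2) map_eq_conv by metis
    hence "inv \<tau> \<circ> \<sigma> \<in> Aut L M (E \<union> set a)" by (rule inv_comp_in_Aut[OF \<sigma> \<tau>E])
    hence "(inv \<tau> \<circ> \<sigma>) b = b" by (rule dcl_fixed_by_Aut[OF b(1)])
    hence "\<sigma> b = \<tau> b" using Aut_inv_eq(2)[OF \<tau>(1), of "\<sigma> b"] by simp
    thus "\<sigma> b = b" using \<tau>(1) unfolding Aut_def by simp
  qed
  moreover have "small \<kappa> (E \<union> set a)" using small_Un_finite[OF sE] by blast
  ultimately show ?thesis using primary_dcl_iff[of "E \<union> set a" E] by blast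
qed

text \<open>The code lies in dcl (E \<union> set a) \<inter> acl E.\<close>
lemma invariant_code_in_dcl:
  assumes sE: "small \<kappa> E" and prim: "primary L M E (dcl L M (E \<union> set a))"
    and d: "is_code L M d S"
    and inv: "\<forall>\<sigma>\<in>Aut L M (E \<union> set a). map \<sigma> ` S = S"
    and fin: "finite ((\<lambda>\<sigma>. map \<sigma> ` S) ` Aut L M E)"
  shows "set d \<subseteq> dcl L M E"
proof
  fix y assume y: "y \<in> set d"
  have sX: "small \<kappa> (E \<union> set a)" using small_Un_finite[OF sE] by blast
  have "\<sigma> y = y" if \<sigma>: "\<sigma> \<in> Aut L M (E \<union> set a)" for \<sigma>
  proof -
    have "map \<sigma> d = d" using code_fixed_iff[OF d \<sigma>] inv \<sigma> by blast
    thus ?thesis using y by (rule map_eq_self_imp_fixed)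
  qed
  hence "y \<in> dcl L M (E \<union> set a)" using dcl_iff_fixed_by_Aut[OF sX, of y] by blast
  moreover have "\<sigma> y = \<tau> y" if \<sigma>: "\<sigma> \<in> Aut L M E" and \<tau>: "\<tau> \<in> Aut L M E"
    and same: "map \<sigma> ` S = map \<tau> ` S" for \<sigma> \<tau>
  proof -
    have inv_map: "map (inv \<tau>) (map \<tau> s) = s" for s
      using Aut_inv_eq(1)[OF \<tau>] by (induction s) auto
    have "map (inv \<tau> \<circ> \<sigma>) ` S = map (inv \<tau>) ` map \<sigma> ` S" by (simp add: image_image)
    also have "\<dots> = S" unfolding same image_image inv_map by simp
    finally have "map (inv \<tau> \<circ> \<sigma>) d = d"
      using code_fixed_iff[OF d comp_in_Aut[OF inv_in_Aut[OF \<tau>] \<sigma>]] by blast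
    hence "(inv \<tau> \<circ> \<sigma>) y = y" using y by (rule map_eq_self_imp_fixed)
    thus ?thesis using Aut_inv_eq(2)[OF \<tau>, of "\<sigma> y"] by simp
  qed
  hence "finite ((\<lambda>\<sigma>. \<sigma> y) ` Aut L M E)" by (rule finite_image_factor[OF fin])
  hence "y \<in> acl L M E" using acl_iff_finite_orbit[OF sE, of y] by blast
  ultimately show "y \<in> dcl L M E" using prim primary_dcl_iff[OF sX, of E] by blast
qed

lemma primary_realizations_agree:
  assumes sE: "small \<kappa> E" and fs: "FS L M" and ctp: "ctype L M E n p"
    and a: "length a = n" "realizes M a p" and prim: "primary L M E (dcl L M (E \<union> set a))"
    and b: "length b = n" "realizes M b p" and \<phi>: "Lfm L (acl L M E) n \<phi>"
  shows "satT M b \<phi> \<longleftrightarrow> satT M a \<phi>"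
proof -
  obtain c where c: "set c = params \<phi>" using finite_list[OF finite_params[of \<phi>]] by blast
  hence c_acl: "set c \<subseteq> acl L M E" using \<phi> unfolding Lfm_def by simp
  define S where "S x = satisfying_conjugates L M E \<phi> c x" for x
  have S_Aut: "map \<sigma> ` S x = S (map \<sigma> x)" if "\<sigma> \<in> Aut L M E" "length x = n" for \<sigma> x
    using satisfying_conjugates_Aut[OF that(1)] \<phi> that(2) unfolding S_def Lfm_def by simp
  have S_orbit: "S a \<subseteq> (\<lambda>\<sigma>. map \<sigma> c) ` Aut L M E"
    unfolding S_def by (rule satisfying_conjugates_subset_orbit)
  hence "finite (S a)" using finite_list_orbit[OF c_acl] finite_subset by blast
  moreover have "\<forall>s\<in>S a. length s = length c" using S_orbit by auto
  ultimately obtain d where d: "is_code L M d (S a)"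
    using fs[unfolded FS_def, rule_format, OF conjI] by blast
  have "set d \<subseteq> dcl L M E"
  proof (rule invariant_code_in_dcl[OF sE prim d])
    show "\<forall>\<sigma>\<in>Aut L M (E \<union> set a). map \<sigma> ` S a = S a"
    proof
      fix \<sigma> assume \<sigma>: "\<sigma> \<in> Aut L M (E \<union> set a)"
      hence "\<sigma> \<in> Aut L M E" using Aut_antimono[of E "E \<union> set a" L M] by blast
      hence "map \<sigma> ` S a = S (map \<sigma> a)" using a(1) by (rule S_Aut)
      moreover have "map \<sigma> a = a" using \<sigma> unfolding Aut_def by (simp add: map_idI)
      ultimately show "map \<sigma> ` S a = S a" by simp
    qed
    show "finite ((\<lambda>\<sigma>. map \<sigma> ` S a) ` Aut L M E)"
      unfolding S_def using finite_satisfying_conjugates_orbit[OF c_acl] \<phi> a(1)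
      by (simp add: Lfm_def)
  qed
  have "\<forall>\<psi>. Lfm L E n \<psi> \<longrightarrow> (satT M a \<psi> \<longleftrightarrow> satT M b \<psi>)"
    using ctype_realizers_agree[OF ctp a(2) b(2)] by blast
  then obtain \<sigma> where \<sigma>: "\<sigma> \<in> Aut L M E" "map \<sigma> a = b"
    using same_type_Aut[OF sE a(1) b(1)] by blast
  have "\<sigma> x = x" if "x \<in> set d" for x
    using \<open>set d \<subseteq> dcl L M E\<close> that by (intro dcl_fixed_by_Aut[OF _ \<sigma>(1)]) blast
  hence "map \<sigma> d = d" by (rule map_idI)
  hence "S b = S a" using code_fixed_iff[OF d \<sigma>(1)] S_Aut[OF \<sigma>(1) a(1)] \<sigma>(2) by simp
  thus ?thesis using self_in_satisfying_conjugates_iff[OF c] unfolding S_def by blast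
qed

lemma primary_imp_acl_stationary:
  assumes sE: "small \<kappa> E" and fs: "FS L M" and ctp: "ctype L M E n p"
    and a: "length a = n" "realizes M a p" and prim: "primary L M E (dcl L M (E \<union> set a))"
  shows "acl_stationary L M E n p"
proof -
  let ?T = "tp L M (acl L M E) a"
  have pL: "\<forall>\<phi>\<in>p. Lfm L E (length a) \<phi>" using ctype_Lfm[OF ctp] a(1) by simp
  have T: "ctype L M (acl L M E) n ?T \<and> p \<subseteq> ?T"
    using ctype_tp[of L M "acl L M E" a] subset_tp_of_realizes[OF a(2) pL subset_acl] a(1) by simp
  show ?thesis unfolding acl_stationary_def
  proof (rule ex1I[of _ ?T])
    fix q assume "ctype L M (acl L M E) n q \<and> p \<subseteq> q"
    hence q: "ctype L M (acl L M E) n q" "p \<subseteq> q" by blast+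
    have "q \<subseteq> ?T"
    proof
      fix \<phi> assume \<phi>q: "\<phi> \<in> q"
      have L\<phi>: "Lfm L (acl L M E) n \<phi>" using ctype_Lfm[OF q(1) \<phi>q] .
      have "small \<kappa> (E \<union> params \<phi>)" using small_Un_finite[OF sE finite_params] .
      then obtain b where b: "length b = n" "realizes M b {\<psi>\<in>q. Lfm L (E \<union> params \<phi>) n \<psi>}"
        using realize_ctype_restriction[OF _ q(1)] by blast
      have "\<psi> \<in> {\<psi>\<in>q. Lfm L (E \<union> params \<phi>) n \<psi>}" if "\<psi> \<in> p" for \<psi>
        using that q(2) ctype_Lfm[OF ctp that] Lfm_mono[of L E n \<psi> "E \<union> params \<phi>"] by blast
      hence "realizes M b p" using b(2) unfolding realizes_def by blast
      moreover have "\<phi> \<in> {\<psi>\<in>q. Lfm L (E \<union> params \<phi>) n \<psi>}" using \<phi>q L\<phi> unfolding Lfm_def by blast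
      hence "satT M b \<phi>" using b(2) unfolding realizes_def by blast
      ultimately have "satT M a \<phi>"
        using primary_realizations_agree[OF sE fs ctp a prim b(1) _ L\<phi>] by blast
      thus "\<phi> \<in> ?T" using L\<phi> a(1) unfolding tp_def by simp
    qed
    thus "q = ?T" using ctype_subset_tp_imp_eq[of L M "acl L M E" a q] q(1) a(1) by simp
  qed (rule T)
qed

end

theorem mainTheorem9:
  fixes L :: "('f,'r) lang" and M :: "('f,'r,'a) struc" and \<kappa> :: "'k rel"
    and E :: "'a set" and n :: nat and p :: "('f,'r,'a) fm set"
  assumes "monster L M \<kappa>" and "FS L M" and "small \<kappa> E" and "ctype L M E n p"
  shows "(acl_stationary L M E n p \<longleftrightarrow>
            (\<exists>a. length a = n \<and> realizes M a p \<and> primary L M E (dcl L M (E \<union> set a))))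
       \<and> ((\<exists>a. length a = n \<and> realizes M a p \<and> primary L M E (dcl L M (E \<union> set a))) \<longleftrightarrow>
            (\<forall>a. length a = n \<and> realizes M a p \<longrightarrow> primary L M E (dcl L M (E \<union> set a))))"
proof -
  interpret monster_model L M \<kappa> by unfold_locales (rule assms(1))
  obtain a0 where "length a0 = n" "realizes M a0 p" using realize_ctype[OF assms(3,4)] by blast
  moreover have "acl_stationary L M E n p \<Longrightarrow>
      \<forall>a. length a = n \<and> realizes M a p \<longrightarrow> primary L M E (dcl L M (E \<union> set a))"
    using acl_stationary_imp_primary[OF assms(3,4)] by blast
  moreover have "\<exists>a. length a = n \<and> realizes M a p \<and> primary L M E (dcl L M (E \<union> set a)) \<Longrightarrow>
      acl_stationary L M E n p"
    using primary_imp_acl_stationary[OF assms(3,2,4)] by blast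
  ultimately show ?thesis by blast
qed

end
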